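(* Fix $p\ge1$, $v\in\mathbb{R}^p$ and a $p\times p$ matrix $Q$ that is positive definite or zero. Let $\{(X_i,Y_i)\}_{i=1}^\infty$ be random pairs with $X_i\in\mathbb{R}^p$, $Y_i\in\{0,1\}$ satisfying (A1) they are i.i.d. with $Y_i\mid X_i\sim\mathrm{Bernoulli}(G(X_i))$ for some measurable $G:\mathbb{R}^p\to(0,1)$; (A2) $\mathbb{E}X_1X_1^T$ is finite and positive definite; (A3) for every open orthant $S_j$ of $\mathbb{R}^p$ ($j=1,\dots,2^p$) and every $\beta\ne0$, $\mathbb{P}\big((1_{S_j}(X_1)+1_{S_j}(-X_1))X_1^T\beta\ne0\big)>0$. Then, almost surely, the posterior distribution based on $\{(X_i,Y_i)\}_{i=1}^n$ is proper for all sufficiently large $n$.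
   Context: The posterior based on $\{(X_i,Y_i)\}_{i=1}^n$ is the (possibly improper) density $\pi(\beta)\propto\prod_{i=1}^n\Phi(X_i^T\beta)^{Y_i}(1-\Phi(X_i^T\beta))^{1-Y_i}\exp\{-\frac12(\beta-v)^TQ(\beta-v)\}$ on $\mathbb{R}^p$, with $\Phi$ the standard normal cdf; it is proper if the right-hand side is integrable over $\mathbb{R}^p$. *)

theory Defs
  imports "HOL-Probability.Probability"
begin

definition Phi :: "real \<Rightarrow> real" where
  "Phi t = (\<integral>x. indicator {..t} x * std_normal_density x \<partial>lborel)"

definition pos_def :: "real^'p^'p \<Rightarrow> bool" where
  "pos_def A \<longleftrightarrow> transpose A = A \<and> (\<forall>x. x \<noteq> 0 \<longrightarrow> x \<bullet> (A *v x) > 0)"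

definition sign_vector :: "real^'p \<Rightarrow> bool" where
  "sign_vector s \<longleftrightarrow> (\<forall>k. s $ k = 1 \<or> s $ k = -1)"

definition open_orthant :: "real^'p \<Rightarrow> (real^'p) set" where
  "open_orthant s = {x. \<forall>k. s $ k * x $ k > 0}"

text \<open>Unnormalized posterior density based on the first n observations
  (indices 0..n-1, corresponding to 1..n in the paper).\<close>
definition posterior_dens ::
  "(nat \<Rightarrow> real^'p) \<Rightarrow> (nat \<Rightarrow> real) \<Rightarrow> real^'p \<Rightarrow> real^'p^'p \<Rightarrow> nat \<Rightarrow> real^'p \<Rightarrow> real" where
  "posterior_dens x y v Q n \<beta> =
     (\<Prod>i<n. Phi (x i \<bullet> \<beta>) ^ nat \<lfloor>y i\<rfloor> * (1 - Phi (x i \<bullet> \<beta>)) ^ nat \<lfloor>1 - y i\<rfloor>)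
     * exp (- (1/2) * ((\<beta> - v) \<bullet> (Q *v (\<beta> - v))))"

definition posterior_proper ::
  "(nat \<Rightarrow> real^'p) \<Rightarrow> (nat \<Rightarrow> real) \<Rightarrow> real^'p \<Rightarrow> real^'p^'p \<Rightarrow> nat \<Rightarrow> bool" where
  "posterior_proper x y v Q n \<longleftrightarrow> integrable lborel (posterior_dens x y v Q n)"

end

theory Submission
  imports Defs
begin

(*
  Suppose the first N observations are non-separable with a margin: every direction beta
  misclassifies some observation i < N by at least c |beta|. In direction beta the
  posterior density is then bounded by the single likelihood factor of that observation,
  a standard normal tail probability at distance at least c |beta| from the origin.
  Its 2p-th moment bound decays like (1 + c^2 |beta|^2)^(-p), which is dominated by a
  product of Cauchy densities and hence integrable; the prior factor is at most 1.

  Such an N exists almost surely. As 0 < G < 1 and X_1 . u <> 0 with positive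
  probability, each unit vector u is
  misclassified with some margin 1/k by X_1 of norm at most k with positive probability.
  This persists for directions within 1/(2k^2) of u, so by compactness finitely many such
  events cover the unit sphere, and by independence each of them eventually occurs.
*)

section \<open>Tails of the probit likelihood\<close>

lemma integrable_std_normal_indicator:
  assumes "A \<in> sets borel"
  shows "integrable lborel (\<lambda>x. indicator A x * std_normal_density x)"
proof -
  have "integrable lborel (\<lambda>x. std_normal_density x * indicator A x)"
    using assms by (intro integrable_real_mult_indicator) auto
  then show ?thesis by (simp add: mult.commute)
qed

lemma mono_Phi: "mono Phi"
  unfolding mono_def Phi_def
  by (intro allI impI integral_mono integrable_std_normal_indicator)
     (auto simp: indicator_def normal_density_nonneg)

lemma borel_measurable_Phi [measurable]: "Phi \<in> borel_measurable borel"
  by (rule borel_measurable_mono[OF mono_Phi])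

lemma Phi_nonneg: "0 \<le> Phi t"
  unfolding Phi_def by (intro Bochner_Integration.integral_nonneg) (auto simp: normal_density_nonneg)

lemma one_minus_Phi: "1 - Phi t = (\<integral>x. indicator {t<..} x * std_normal_density x \<partial>lborel)"
proof -
  have "Phi t + (\<integral>x. indicator {t<..} x * std_normal_density x \<partial>lborel)
      = (\<integral>x. indicator {..t} x * std_normal_density x + indicator {t<..} x * std_normal_density x \<partial>lborel)"
    unfolding Phi_def
    by (rule Bochner_Integration.integral_add[symmetric]) (auto intro!: integrable_std_normal_indicator)
  also have "\<dots> = (\<integral>x. std_normal_density x \<partial>lborel)"
    by (rule Bochner_Integration.integral_cong) (auto simp: indicator_def)
  finally show ?thesis by simp
qed

lemma Phi_le_1: "Phi t \<le> 1"
proof -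
  have "0 \<le> 1 - Phi t" unfolding one_minus_Phi
    by (intro Bochner_Integration.integral_nonneg) (auto simp: normal_density_nonneg)
  then show ?thesis by simp
qed

lemma std_normal_mass_le_moment:
  assumes "t \<noteq> 0" and A: "A \<in> sets borel" and far: "A \<subseteq> {x. \<bar>t\<bar> \<le> \<bar>x\<bar>}"
  shows "(\<integral>x. indicator A x * std_normal_density x \<partial>lborel)
      \<le> (\<integral>x. std_normal_density x * x ^ (2*m) \<partial>lborel) / t ^ (2*m)"
proof -
  have even: "z ^ (2*m) = \<bar>z\<bar> ^ (2*m)" for z :: real
    by (simp add: power_even_abs)
  have t: "0 < t ^ (2*m)" using \<open>t \<noteq> 0\<close> by (subst even) simp
  have "indicator A x * std_normal_density x \<le> std_normal_density x * x ^ (2*m) / t ^ (2*m)" for x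
  proof (cases "x \<in> A")
    case True
    then have "\<bar>t\<bar> ^ (2*m) \<le> \<bar>x\<bar> ^ (2*m)" using far by (intro power_mono) auto
    then have "1 \<le> x ^ (2*m) / t ^ (2*m)" using t even by simp
    then show ?thesis
      using True mult_left_mono[OF _ normal_density_nonneg] by fastforce
  next
    case False
    then show ?thesis using t even[of x] by (simp add: normal_density_nonneg)
  qed
  then have "(\<integral>x. indicator A x * std_normal_density x \<partial>lborel)
      \<le> (\<integral>x. std_normal_density x * x ^ (2*m) / t ^ (2*m) \<partial>lborel)"
    using integrable_std_normal_moment[of "2*m"]
    by (intro integral_mono integrable_std_normal_indicator A integrable_divide) auto
  then show ?thesis by simp
qed

lemma le_inverse_power_1_plus_square:
  fixes T t K :: real
  assumes "0 \<le> T" "T \<le> 1" "0 \<le> K" and tail: "t \<noteq> 0 \<Longrightarrow> T \<le> K / t ^ (2*m)"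
  shows "T \<le> 2^m * (1 + K) / (1 + t^2)^m"
proof (cases "1 \<le> t^2")
  case True
  then have "t \<noteq> 0" by auto
  then have t: "0 < t ^ (2*m)" by (simp add: power_mult)
  have "(1 + t^2)^m \<le> (2 * t^2)^m" using True by (intro power_mono) auto
  then have le: "(1 + t^2)^m \<le> 2^m * t ^ (2*m)" by (simp add: power_mult power_mult_distrib)
  have "T \<le> K / t ^ (2*m)" using tail[OF \<open>t \<noteq> 0\<close>] .
  also have "\<dots> \<le> (1 + K) / t ^ (2*m)" using t by (intro divide_right_mono) auto
  also have "\<dots> = 2^m * (1 + K) / (2^m * t ^ (2*m))" by simp
  also have "\<dots> \<le> 2^m * (1 + K) / (1 + t^2)^m"
    using le t \<open>0 \<le> K\<close> by (intro divide_left_mono) (auto simp: add_pos_nonneg)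
  finally show ?thesis .
next
  case False
  then have "(1 + t^2)^m \<le> 2^m" by (intro power_mono) auto
  then have "(1 + K) * (1 + t^2)^m \<le> (1 + K) * 2^m"
    using \<open>0 \<le> K\<close> by (intro mult_left_mono) auto
  then have "1 + K \<le> 2^m * (1 + K) / (1 + t^2)^m"
    by (simp add: field_simps add_pos_nonneg)
  then show ?thesis using assms(2,3) by linarith
qed

definition probit_lik :: "real \<Rightarrow> real \<Rightarrow> real" where
  "probit_lik y t = Phi t ^ nat \<lfloor>y\<rfloor> * (1 - Phi t) ^ nat \<lfloor>1 - y\<rfloor>"

lemma probit_lik_nonneg: "y \<in> {0, 1} \<Longrightarrow> 0 \<le> probit_lik y t"
  using Phi_nonneg[of t] Phi_le_1[of t] by (auto simp: probit_lik_def)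

lemma probit_lik_le_1: "y \<in> {0, 1} \<Longrightarrow> probit_lik y t \<le> 1"
  using Phi_nonneg[of t] Phi_le_1[of t] by (auto simp: probit_lik_def)

text \<open>When the label disagrees with the sign of \<open>t\<close>, the likelihood is a normal tail probability,
  which Chebyshev's inequality for the \<open>2m\<close>-th moment bounds.\<close>
lemma probit_lik_decay:
  obtains C where "0 \<le> C"
    and "\<And>y t. y \<in> {0, 1} \<Longrightarrow> (2*y - 1) * t \<le> 0 \<Longrightarrow> probit_lik y t \<le> C / (1 + t^2)^m"
proof
  define K where "K = (\<integral>x. std_normal_density x * x ^ (2*m) \<partial>lborel)"
  have "0 \<le> K" unfolding K_def
    by (intro Bochner_Integration.integral_nonneg) (auto simp: normal_density_nonneg)
  then show "0 \<le> 2^m * (1 + K)" by simp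
  fix y t :: real
  assume y: "y \<in> {0, 1}" and disagree: "(2*y - 1) * t \<le> 0"
  show "probit_lik y t \<le> 2^m * (1 + K) / (1 + t^2)^m"
  proof (rule le_inverse_power_1_plus_square[OF probit_lik_nonneg[OF y] probit_lik_le_1[OF y] \<open>0 \<le> K\<close>])
    assume "t \<noteq> 0"
    show "probit_lik y t \<le> K / t ^ (2*m)"
    proof (cases "y = 1")
      case True
      then have "t < 0" using disagree \<open>t \<noteq> 0\<close> by (auto simp: mult_le_0_iff)
      then have "Phi t \<le> K / t ^ (2*m)"
        unfolding Phi_def K_def by (intro std_normal_mass_le_moment \<open>t \<noteq> 0\<close>) auto
      then show ?thesis using True by (simp add: probit_lik_def)
    next
      case False
      then have "y = 0" using y by auto
      then have "t > 0" using disagree \<open>t \<noteq> 0\<close> by (auto simp: mult_le_0_iff)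
      then have "1 - Phi t \<le> K / t ^ (2*m)"
        unfolding one_minus_Phi K_def by (intro std_normal_mass_le_moment \<open>t \<noteq> 0\<close>) auto
      then show ?thesis using \<open>y = 0\<close> by (simp add: probit_lik_def)
    qed
  qed
qed

section \<open>Integrability by comparison with Cauchy densities\<close>

lemma integrable_prod_inverse_1_plus_square:
  "integrable lborel (\<lambda>\<beta>::'a::euclidean_space. \<Prod>b\<in>Basis. inverse (1 + (\<beta> \<bullet> b)^2))"
proof (rule integrableI_nonneg)
  have cauchy: "integrable lborel (\<lambda>x::real. inverse (1 + x^2))"
    using integrable_inverse_1_plus_square by (simp add: set_integrable_def einterval_def)
  have "(\<integral>\<^sup>+\<beta>. ennreal (\<Prod>b\<in>Basis. inverse (1 + (\<beta> \<bullet> b)^2)) \<partial>(lborel::'a measure))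
      = (\<integral>\<^sup>+\<beta>. (\<Prod>b\<in>Basis. ennreal (inverse (1 + (\<beta> \<bullet> b)^2))) \<partial>(lborel::'a measure))"
    by (subst prod_ennreal) auto
  also have "\<dots> = (\<Prod>b\<in>(Basis::'a set). (\<integral>\<^sup>+x. ennreal (inverse (1 + x^2)) \<partial>lborel))"
    by (rule nn_integral_lborel_prod) auto
  also have "\<dots> = (\<Prod>b\<in>(Basis::'a set). ennreal (LBINT x. inverse (1 + x^2)))"
    using nn_integral_eq_integral[OF cauchy] by simp
  also have "\<dots> < \<infinity>"
    by (subst prod_ennreal) (auto intro!: Bochner_Integration.integral_nonneg)
  finally show "(\<integral>\<^sup>+\<beta>. ennreal (\<Prod>b\<in>Basis. inverse (1 + (\<beta> \<bullet> b)^2)) \<partial>(lborel::'a measure)) < \<infinity>" .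
qed (auto intro!: prod_nonneg)

lemma prod_1_plus_square_le:
  fixes \<beta> :: "'a::euclidean_space"
  shows "(\<Prod>b\<in>Basis. 1 + (\<beta> \<bullet> b)^2) \<le> (1 + norm \<beta> ^ 2) ^ DIM('a)"
proof -
  have "(\<Prod>b\<in>Basis. 1 + (\<beta> \<bullet> b)^2) \<le> (\<Prod>b\<in>(Basis::'a set). 1 + norm \<beta> ^ 2)"
  proof (rule prod_mono)
    fix b :: 'a assume "b \<in> Basis"
    then have "\<bar>\<beta> \<bullet> b\<bar> \<le> norm \<beta>" by (rule Basis_le_norm)
    then have "(\<beta> \<bullet> b)^2 \<le> norm \<beta> ^ 2"
      by (metis abs_ge_zero power2_abs power_mono)
    then show "0 \<le> 1 + (\<beta> \<bullet> b)^2 \<and> 1 + (\<beta> \<bullet> b)^2 \<le> 1 + norm \<beta> ^ 2" by simp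
  qed
  then show ?thesis by simp
qed

text \<open>Dominated by a multiple of the product of Cauchy densities.\<close>
lemma integrable_if_inverse_power_decay:
  fixes f :: "'a::euclidean_space \<Rightarrow> real"
  assumes f: "f \<in> borel_measurable lborel" and "0 < c"
    and nonneg: "\<And>\<beta>. 0 \<le> f \<beta>" and decay: "\<And>\<beta>. f \<beta> \<le> C / (1 + (c * norm \<beta>)^2) ^ DIM('a)"
  shows "integrable lborel f"
proof -
  define d where "d = min 1 (c^2)"
  have d: "0 < d" "d \<le> 1" "d \<le> c^2" using \<open>0 < c\<close> by (auto simp: d_def)
  have "0 \<le> C" using nonneg[of 0] decay[of 0] by simp
  have bound: "f \<beta> \<le> C / d ^ DIM('a) * (\<Prod>b\<in>Basis. inverse (1 + (\<beta> \<bullet> b)^2))" for \<beta>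
  proof -
    have "d * (1 + norm \<beta> ^ 2) \<le> 1 + (c * norm \<beta>)^2"
      using d mult_right_mono[OF d(3), of "norm \<beta> ^ 2"] by (simp add: algebra_simps power_mult_distrib)
    have "d ^ DIM('a) * (\<Prod>b\<in>Basis. 1 + (\<beta> \<bullet> b)^2) \<le> d ^ DIM('a) * (1 + norm \<beta> ^ 2) ^ DIM('a)"
      using d by (intro mult_left_mono prod_1_plus_square_le) simp
    also have "\<dots> = (d * (1 + norm \<beta> ^ 2)) ^ DIM('a)"
      by (rule power_mult_distrib[symmetric])
    also have "\<dots> \<le> (1 + (c * norm \<beta>)^2) ^ DIM('a)"
      using d \<open>d * (1 + norm \<beta> ^ 2) \<le> 1 + (c * norm \<beta>)^2\<close> by (intro power_mono) auto
    finally have le: "d ^ DIM('a) * (\<Prod>b\<in>Basis. 1 + (\<beta> \<bullet> b)^2) \<le> (1 + (c * norm \<beta>)^2) ^ DIM('a)" .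
    have pos: "0 < d ^ DIM('a) * (\<Prod>b\<in>(Basis::'a set). 1 + (\<beta> \<bullet> b)^2)"
      using d by (intro mult_pos_pos prod_pos) (auto intro: add_pos_nonneg)
    have "f \<beta> \<le> C / (1 + (c * norm \<beta>)^2) ^ DIM('a)" by (rule decay)
    also have "\<dots> \<le> C / (d ^ DIM('a) * (\<Prod>b\<in>Basis. 1 + (\<beta> \<bullet> b)^2))"
      using le pos \<open>0 \<le> C\<close> by (intro divide_left_mono) auto
    also have "\<dots> = C / d ^ DIM('a) * inverse (\<Prod>b\<in>Basis. 1 + (\<beta> \<bullet> b)^2)"
      by (simp add: divide_inverse inverse_mult_distrib mult_ac)
    also have "\<dots> = C / d ^ DIM('a) * (\<Prod>b\<in>Basis. inverse (1 + (\<beta> \<bullet> b)^2))"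
      using prod_inversef[of "\<lambda>b. 1 + (\<beta> \<bullet> b)^2" "Basis::'a set"] by (simp add: comp_def)
    finally show ?thesis .
  qed
  show ?thesis
  proof (rule Bochner_Integration.integrable_bound[OF integrable_mult_right f])
    show "integrable lborel (\<lambda>\<beta>::'a. \<Prod>b\<in>Basis. inverse (1 + (\<beta> \<bullet> b)^2))"
      by (rule integrable_prod_inverse_1_plus_square)
    show "AE \<beta> in lborel. norm (f \<beta>) \<le> norm (C / d ^ DIM('a) * (\<Prod>b\<in>Basis. inverse (1 + (\<beta> \<bullet> b)^2)))"
      using bound nonneg by (intro AE_I2) (metis abs_ge_self abs_of_nonneg order_trans real_norm_def)
  qed
qed

section \<open>Properness of the posterior for non-separable data\<close>

text \<open>The label \<open>y \<in> {0, 1}\<close> enters as the sign \<open>2 y - 1 \<in> {-1, 1}\<close>.\<close>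
definition nonseparable_with_margin :: "(nat \<Rightarrow> 'a::real_inner) \<Rightarrow> (nat \<Rightarrow> real) \<Rightarrow> nat \<Rightarrow> real \<Rightarrow> bool" where
  "nonseparable_with_margin x y n c \<longleftrightarrow> (\<forall>\<beta>. \<exists>i<n. (2 * y i - 1) * (x i \<bullet> \<beta>) \<le> - c * norm \<beta>)"

lemma nonseparable_with_margin_mono:
  "nonseparable_with_margin x y n c \<Longrightarrow> n \<le> n' \<Longrightarrow> nonseparable_with_margin x y n' c"
  unfolding nonseparable_with_margin_def by (meson less_le_trans)

lemma borel_measurable_matrix_vector_mult [measurable]:
  "(\<lambda>z. (A::real^'n^'m) *v z) \<in> borel_measurable borel"
  by (intro borel_measurable_continuous_onI matrix_vector_mult_linear_continuous_on)

lemma pos_def_or_zero_quadratic_nonneg: "pos_def Q \<or> Q = 0 \<Longrightarrow> 0 \<le> z \<bullet> (Q *v z)"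
  unfolding pos_def_def by (cases "z = 0") (auto intro: less_imp_le)

lemma prod_le_factor:
  fixes f :: "'a \<Rightarrow> real"
  assumes "finite A" "i \<in> A" "\<And>j. j \<in> A \<Longrightarrow> 0 \<le> f j \<and> f j \<le> 1"
  shows "prod f A \<le> f i"
proof -
  have "prod f A = f i * prod f (A - {i})" using assms by (simp add: prod.remove)
  also have "\<dots> \<le> f i * 1"
    using assms by (intro mult_left_mono prod_le_1) auto
  finally show ?thesis by simp
qed

lemma posterior_proper_if_nonseparable:
  fixes x :: "nat \<Rightarrow> real^'p"
  assumes y: "\<And>i. y i \<in> {0, 1}" and Q: "pos_def Q \<or> Q = 0" and "0 < c"
    and nonsep: "nonseparable_with_margin x y n c"
  shows "posterior_proper x y v Q n"
proof -
  obtain C where "0 \<le> C" and decay: "\<And>y t. y \<in> {0, 1} \<Longrightarrow> (2*y - 1) * t \<le> 0 \<Longrightarrow>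
      probit_lik y t \<le> C / (1 + t^2) ^ DIM(real^'p)"
    using probit_lik_decay by blast
  show ?thesis unfolding posterior_proper_def
  proof (rule integrable_if_inverse_power_decay[OF _ \<open>0 < c\<close>])
    show "posterior_dens x y v Q n \<in> borel_measurable lborel"
      unfolding posterior_dens_def by measurable
    fix \<beta> :: "real^'p"
    define L where "L = (\<Prod>i<n. probit_lik (y i) (x i \<bullet> \<beta>))"
    define prior where "prior = exp (- (1/2) * ((\<beta> - v) \<bullet> (Q *v (\<beta> - v))))"
    have dens: "posterior_dens x y v Q n \<beta> = L * prior"
      unfolding posterior_dens_def L_def prior_def probit_lik_def ..
    have "0 \<le> L" unfolding L_def using y by (intro prod_nonneg probit_lik_nonneg) auto
    moreover have "0 < prior" "prior \<le> 1"
      using pos_def_or_zero_quadratic_nonneg[OF Q, of "\<beta> - v"] by (auto simp: prior_def)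
    ultimately have dens_le: "posterior_dens x y v Q n \<beta> \<le> L" and "0 \<le> posterior_dens x y v Q n \<beta>"
      unfolding dens by (auto intro: mult_left_le)
    then show "0 \<le> posterior_dens x y v Q n \<beta>" by simp
    obtain i where "i < n" and mis: "(2 * y i - 1) * (x i \<bullet> \<beta>) \<le> - c * norm \<beta>"
      using nonsep unfolding nonseparable_with_margin_def by blast
    define t where "t = x i \<bullet> \<beta>"
    have "0 \<le> c * norm \<beta>" using \<open>0 < c\<close> by simp
    have "\<bar>2 * y i - 1\<bar> = 1" using y[of i] by auto
    then have "c * norm \<beta> \<le> \<bar>t\<bar>"
      using mis \<open>0 \<le> c * norm \<beta>\<close> unfolding t_def by (simp add: abs_mult abs_if split: if_splits)
    then have "(c * norm \<beta>)^2 \<le> t^2"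
      using \<open>0 \<le> c * norm \<beta>\<close> by (metis power2_abs power_mono)
    have "L \<le> probit_lik (y i) t"
      unfolding L_def t_def using \<open>i < n\<close> y probit_lik_nonneg probit_lik_le_1
      by (intro prod_le_factor) auto
    also have "\<dots> \<le> C / (1 + t^2) ^ DIM(real^'p)"
      using mis \<open>0 \<le> c * norm \<beta>\<close> unfolding t_def by (intro decay y) linarith
    also have "\<dots> \<le> C / (1 + (c * norm \<beta>)^2) ^ DIM(real^'p)"
      using \<open>(c * norm \<beta>)^2 \<le> t^2\<close> \<open>0 \<le> C\<close>
      by (intro divide_left_mono power_mono) (auto intro!: mult_pos_pos zero_less_power add_pos_nonneg)
    finally show "posterior_dens x y v Q n \<beta> \<le> C / (1 + (c * norm \<beta>)^2) ^ DIM(real^'p)"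
      using dens_le by linarith
  qed
qed

section \<open>Non-separability of i.i.d. samples\<close>

lemma (in prob_space) AE_exists_iid_in:
  fixes Z :: "nat \<Rightarrow> 'a \<Rightarrow> 'b"
  assumes indep: "indep_vars (\<lambda>_. N) Z UNIV" and Z: "\<And>i. Z i \<in> measurable M N"
    and ident: "\<And>i. distr M N (Z i) = distr M N (Z 0)"
    and B: "B \<in> sets N" and pos: "prob {\<omega> \<in> space M. Z 0 \<omega> \<in> B} > 0"
  shows "AE \<omega> in M. \<exists>i. Z i \<omega> \<in> B"
proof -
  define q where "q = prob {\<omega> \<in> space M. Z 0 \<omega> \<in> B}"
  define miss where "miss i = {\<omega> \<in> space M. Z i \<omega> \<notin> B}" for i
  have miss_events: "miss i \<in> events" for i
    unfolding miss_def using Z[of i] B by measurable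
  have prob_miss: "prob (miss i) = 1 - q" for i
  proof -
    have "prob {\<omega> \<in> space M. Z i \<omega> \<in> B} = measure (distr M N (Z i)) B"
      using Z[of i] B by (subst measure_distr) (auto simp: vimage_def Int_def conj_commute)
    also have "\<dots> = q"
      unfolding ident[of i] q_def using Z[of 0] B
      by (subst measure_distr) (auto simp: vimage_def Int_def conj_commute)
    finally have "prob {\<omega> \<in> space M. Z i \<omega> \<in> B} = q" .
    moreover have "miss i = space M - {\<omega> \<in> space M. Z i \<omega> \<in> B}" unfolding miss_def by auto
    ultimately show ?thesis using Z[of i] B by (simp add: prob_compl)
  qed
  have "indep_events miss UNIV" unfolding miss_def
    by (rule indep_eventsI_indep_vars[OF indep]) (use B sets.sets_into_space in \<open>auto\<close>)
  then have "prob (\<Inter>i. miss i) \<le> (1 - q) ^ Suc n" for n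
  proof -
    have "prob (\<Inter>i. miss i) \<le> prob (\<Inter>i\<in>{..n}. miss i)"
      using miss_events by (intro finite_measure_mono) auto
    also have "\<dots> = (\<Prod>i\<in>{..n}. prob (miss i))"
      using \<open>indep_events miss UNIV\<close> unfolding indep_events_def by auto
    finally show ?thesis by (simp add: prob_miss)
  qed
  moreover have "(\<lambda>n. (1 - q) ^ Suc n) \<longlonglongrightarrow> 0"
    using pos unfolding q_def[symmetric] by (intro LIMSEQ_Suc LIMSEQ_power_zero) (auto simp: q_def)
  ultimately have "prob (\<Inter>i. miss i) = 0"
    using measure_nonneg[of M "\<Inter>i. miss i"] by (meson LIMSEQ_le_const order_antisym)
  then show ?thesis
    using miss_events by (subst (asm) prob_eq_0) (auto simp: miss_def)
qed

lemma (in prob_space) ex_prob_pos_of_cover: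
  fixes A :: "nat \<Rightarrow> 'a set"
  assumes A: "\<And>m. A m \<in> events" and E: "E \<in> events" "E \<subseteq> (\<Union>m. A m)" and "prob E > 0"
  shows "\<exists>m. prob (A m) > 0"
proof (rule ccontr)
  assume "\<not> ?thesis"
  then have "AE \<omega> in M. \<omega> \<notin> A m" for m
    using A prob_eq_0 zero_less_measure_iff by blast
  then have "AE \<omega> in M. \<forall>m. \<omega> \<notin> A m"
    by (simp add: AE_all_countable)
  then have "AE \<omega> in M. \<omega> \<notin> E"
    by eventually_elim (use E(2) in blast)
  then show False
    using \<open>prob E > 0\<close> E prob_eq_0 by force
qed

lemma (in prob_space) integral_indicator_mult_pos:
  fixes X :: "'a \<Rightarrow> 'b::topological_space" and H :: "'b \<Rightarrow> real"
  assumes X: "X \<in> borel_measurable M" and H: "H \<in> borel_measurable borel"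
    and H_range: "\<And>x. 0 < H x \<and> H x \<le> 1"
    and B: "B \<in> sets borel" and pos: "prob {\<omega> \<in> space M. X \<omega> \<in> B} > 0"
  shows "(\<integral>\<omega>. indicator B (X \<omega>) * H (X \<omega>) \<partial>M) > 0"
proof -
  have int: "integrable M (\<lambda>\<omega>. indicator B (X \<omega>) * H (X \<omega>))"
    by (rule integrable_const_bound[where B=1])
      (use X H B H_range in \<open>auto simp: indicator_def abs_le_iff less_imp_le\<close>)
  have nonneg: "AE \<omega> in M. 0 \<le> indicator B (X \<omega>) * H (X \<omega>)"
    using H_range by (intro AE_I2 mult_nonneg_nonneg) (auto intro: less_imp_le)
  have "\<not> (AE \<omega> in M. X \<omega> \<notin> B)"
    using pos prob_eq_0_AE[of "\<lambda>\<omega>. X \<omega> \<in> B"] by auto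
  moreover have "AE \<omega> in M. X \<omega> \<notin> B" if "AE \<omega> in M. indicator B (X \<omega>) * H (X \<omega>) = 0"
    using that by eventually_elim (use H_range in \<open>auto simp: indicator_def less_le\<close>)
  ultimately have "\<not> (AE \<omega> in M. indicator B (X \<omega>) * H (X \<omega>) = 0)"
    by blast
  then show ?thesis
    using integral_nonneg_eq_0_iff_AE[OF int nonneg] integral_nonneg_AE[OF nonneg] by linarith
qed

text \<open>Since \<open>P(Y = 1 | X) = G(X)\<close> takes values in \<open>(0, 1)\<close>, both labels occur wherever \<open>X\<close> does.\<close>
lemma (in prob_space) prob_label_pos:
  fixes X :: "'a \<Rightarrow> 'b::topological_space" and Y :: "'a \<Rightarrow> real"
  assumes X [measurable]: "X \<in> borel_measurable M" and Y [measurable]: "Y \<in> borel_measurable M"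
    and Y01: "\<And>\<omega>. \<omega> \<in> space M \<Longrightarrow> Y \<omega> \<in> {0, 1}"
    and G [measurable]: "G \<in> borel_measurable borel" and G_range: "\<And>x. 0 < G x \<and> G x < 1"
    and cond: "\<And>B. B \<in> sets borel \<Longrightarrow>
        prob {\<omega> \<in> space M. X \<omega> \<in> B \<and> Y \<omega> = 1} = (\<integral>\<omega>. indicator B (X \<omega>) * G (X \<omega>) \<partial>M)"
    and B [measurable]: "B \<in> sets borel" and pos: "prob {\<omega> \<in> space M. X \<omega> \<in> B} > 0"
  shows "prob {\<omega> \<in> space M. X \<omega> \<in> B \<and> Y \<omega> = 1} > 0"
    and "prob {\<omega> \<in> space M. X \<omega> \<in> B \<and> Y \<omega> = 0} > 0"
proof -
  show "prob {\<omega> \<in> space M. X \<omega> \<in> B \<and> Y \<omega> = 1} > 0"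
    unfolding cond[OF B] using G_range pos
    by (intro integral_indicator_mult_pos) (auto intro: less_imp_le)
  have int_ind: "integrable M (\<lambda>\<omega>. indicator B (X \<omega>) :: real)"
    by (rule integrable_const_bound[where B=1]) (auto simp: indicator_def)
  have int_G: "integrable M (\<lambda>\<omega>. indicator B (X \<omega>) * G (X \<omega>))"
    by (rule integrable_const_bound[where B=1])
      (use G_range in \<open>auto simp: indicator_def abs_le_iff less_imp_le\<close>)
  have "(\<integral>\<omega>. indicator B (X \<omega>) \<partial>M) = (\<integral>\<omega>. indicator {\<omega> \<in> space M. X \<omega> \<in> B} \<omega> \<partial>M :: real)"
    by (rule Bochner_Integration.integral_cong) (auto simp: indicator_def)
  then have "prob {\<omega> \<in> space M. X \<omega> \<in> B} = (\<integral>\<omega>. indicator B (X \<omega>) \<partial>M)"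
    by (simp add: Int_absorb2)
  moreover have "prob {\<omega> \<in> space M. X \<omega> \<in> B}
      = prob {\<omega> \<in> space M. X \<omega> \<in> B \<and> Y \<omega> = 1} + prob {\<omega> \<in> space M. X \<omega> \<in> B \<and> Y \<omega> = 0}"
    using Y01 by (subst finite_measure_Union[symmetric]) (auto intro!: arg_cong[where f=prob])
  ultimately have "prob {\<omega> \<in> space M. X \<omega> \<in> B \<and> Y \<omega> = 0}
      = (\<integral>\<omega>. indicator B (X \<omega>) * (1 - G (X \<omega>)) \<partial>M)"
    using cond[OF B] Bochner_Integration.integral_diff[OF int_ind int_G]
    by (simp add: algebra_simps)
  also have "\<dots> > 0"
    using G_range pos by (intro integral_indicator_mult_pos) (auto intro: less_imp_le)
  finally show "prob {\<omega> \<in> space M. X \<omega> \<in> B \<and> Y \<omega> = 0} > 0" .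
qed

lemma (in prob_space) prob_misclassified_pos:
  fixes X :: "'a \<Rightarrow> 'b::real_inner" and Y :: "'a \<Rightarrow> real"
  assumes X [measurable]: "X \<in> borel_measurable M" and Y [measurable]: "Y \<in> borel_measurable M"
    and Y01: "\<And>\<omega>. \<omega> \<in> space M \<Longrightarrow> Y \<omega> \<in> {0, 1}"
    and G: "G \<in> borel_measurable borel" and G_range: "\<And>x. 0 < G x \<and> G x < 1"
    and cond: "\<And>B. B \<in> sets borel \<Longrightarrow>
        prob {\<omega> \<in> space M. X \<omega> \<in> B \<and> Y \<omega> = 1} = (\<integral>\<omega>. indicator B (X \<omega>) * G (X \<omega>) \<partial>M)"
    and pos: "prob {\<omega> \<in> space M. X \<omega> \<bullet> u \<noteq> 0} > 0"
  shows "prob {\<omega> \<in> space M. (2 * Y \<omega> - 1) * (X \<omega> \<bullet> u) < 0} > 0"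
proof -
  let ?D = "{\<omega> \<in> space M. (2 * Y \<omega> - 1) * (X \<omega> \<bullet> u) < 0}"
  have [measurable]: "(\<lambda>x. x \<bullet> u) \<in> borel_measurable borel"
    by (intro borel_measurable_continuous_onI continuous_intros)
  have "{\<omega> \<in> space M. X \<omega> \<bullet> u \<noteq> 0}
      = {\<omega> \<in> space M. X \<omega> \<in> {x. x \<bullet> u < 0}} \<union> {\<omega> \<in> space M. X \<omega> \<in> {x. 0 < x \<bullet> u}}"
    by auto
  then have "prob {\<omega> \<in> space M. X \<omega> \<bullet> u \<noteq> 0}
      \<le> prob {\<omega> \<in> space M. X \<omega> \<in> {x. x \<bullet> u < 0}} + prob {\<omega> \<in> space M. X \<omega> \<in> {x. 0 < x \<bullet> u}}"
    by (simp only:) (rule measure_Un_le; measurable)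
  then consider "prob {\<omega> \<in> space M. X \<omega> \<in> {x. x \<bullet> u < 0}} > 0" | "prob {\<omega> \<in> space M. X \<omega> \<in> {x. 0 < x \<bullet> u}} > 0"
    using pos by (meson add_nonpos_nonpos linorder_not_less order_less_le_trans)
  then show ?thesis
  proof cases
    case 1
    then have "prob {\<omega> \<in> space M. X \<omega> \<in> {x. x \<bullet> u < 0} \<and> Y \<omega> = 1} > 0"
      by (intro prob_label_pos(1)[OF X Y Y01 G G_range cond]) auto
    also have "\<dots> \<le> prob ?D" by (intro finite_measure_mono) auto
    finally show ?thesis .
  next
    case 2
    then have "prob {\<omega> \<in> space M. X \<omega> \<in> {x. 0 < x \<bullet> u} \<and> Y \<omega> = 0} > 0"
      by (intro prob_label_pos(2)[OF X Y Y01 G G_range cond]) auto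
    also have "\<dots> \<le> prob ?D" by (intro finite_measure_mono) auto
    finally show ?thesis .
  qed
qed

text \<open>Bounding \<open>\<parallel>x\<parallel>\<close> by the same \<open>k\<close> as the inverse margin lets the margin survive
  perturbations of \<open>u\<close> of size \<open>1 / (2 k\<^sup>2)\<close>.\<close>
definition margin_set :: "real \<Rightarrow> 'a::real_inner \<Rightarrow> ('a \<times> real) set" where
  "margin_set k u = {(x, y). (2 * y - 1) * (x \<bullet> u) < - 1 / k \<and> norm x \<le> k}"

lemma margin_set_borel [measurable]: "margin_set k u \<in> sets borel"
proof -
  have "margin_set k u = {z. (2 * snd z - 1) * (fst z \<bullet> u) < - 1 / k} \<inter> {z. norm (fst z) \<le> k}"
    by (auto simp: margin_set_def)
  then show ?thesis
    by (simp only:) (intro sets.Int borel_open borel_closed open_Collect_less closed_Collect_le continuous_intros)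
qed

lemma misclassified_in_margin_set:
  assumes "(2 * y - 1) * (x \<bullet> u) < 0"
  shows "\<exists>m. (x, y) \<in> margin_set (real (Suc m)) u"
proof -
  define a where "a = - ((2 * y - 1) * (x \<bullet> u))"
  have "0 < a" using assms by (simp add: a_def)
  obtain m1 :: nat where "inverse a < real m1" using reals_Archimedean2 by blast
  obtain m2 :: nat where "norm x < real m2" using reals_Archimedean2 by blast
  have "inverse (real (Suc (m1 + m2))) < inverse (inverse a)"
    using \<open>inverse a < real m1\<close> \<open>0 < a\<close> by (intro less_imp_inverse_less) auto
  then have "1 / real (Suc (m1 + m2)) < a" using \<open>0 < a\<close> by (simp add: inverse_eq_divide)
  moreover have "norm x \<le> real (Suc (m1 + m2))" using \<open>norm x < real m2\<close> by simp
  ultimately have "(x, y) \<in> margin_set (real (Suc (m1 + m2))) u"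
    unfolding margin_set_def a_def by auto
  then show ?thesis ..
qed

lemma margin_set_perturb:
  assumes xy: "(x, y) \<in> margin_set k u" and y: "\<bar>2 * y - 1\<bar> = 1"
    and close: "dist w u < 1 / (2 * k^2)" and "1 \<le> k"
  shows "(2 * y - 1) * (x \<bullet> w) \<le> - 1 / (2 * k)"
proof -
  have "\<bar>(2 * y - 1) * (x \<bullet> (w - u))\<bar> = \<bar>x \<bullet> (w - u)\<bar>" by (simp add: abs_mult y)
  also have "\<dots> \<le> norm x * norm (w - u)" by (rule Cauchy_Schwarz_ineq2)
  also have "\<dots> \<le> k * (1 / (2 * k^2))"
    using xy close \<open>1 \<le> k\<close> by (intro mult_mono) (auto simp: dist_norm margin_set_def)
  also have "\<dots> = 1 / (2 * k)" using \<open>1 \<le> k\<close> by (simp add: power2_eq_square)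
  finally have "\<bar>(2 * y - 1) * (x \<bullet> (w - u))\<bar> \<le> 1 / (2 * k)" .
  moreover have "(2 * y - 1) * (x \<bullet> w) = (2 * y - 1) * (x \<bullet> u) + (2 * y - 1) * (x \<bullet> (w - u))"
    by (simp add: inner_diff_right algebra_simps)
  moreover have "- 1 / k + 1 / (2 * k) = - 1 / (2 * k)" using \<open>1 \<le> k\<close> by (simp add: field_simps)
  moreover have "(2 * y - 1) * (x \<bullet> u) < - 1 / k" using xy by (simp add: margin_set_def)
  ultimately show ?thesis by (smt (verit) abs_le_D1)
qed

lemma nonseparable_if_margin_sets_hit:
  fixes x :: "nat \<Rightarrow> 'a::real_inner" and P :: "(real \<times> 'a) set"
  assumes y: "\<And>i. y i \<in> {0, 1}" and "finite P" and k: "\<And>k u. (k, u) \<in> P \<Longrightarrow> 1 \<le> k"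
    and cover: "sphere 0 1 \<subseteq> (\<Union>(k, u)\<in>P. ball u (1 / (2 * k^2)))"
    and hit: "\<And>k u. (k, u) \<in> P \<Longrightarrow> \<exists>i. (x i, y i) \<in> margin_set k u"
  shows "\<exists>c>0. \<exists>N. nonseparable_with_margin x y N c"
proof -
  have "\<forall>p\<in>P. \<exists>i. (x i, y i) \<in> margin_set (fst p) (snd p)" using hit by auto
  from bchoice[OF this] obtain idx where "\<forall>p\<in>P. (x (idx p), y (idx p)) \<in> margin_set (fst p) (snd p)"
    by blast
  then have idx: "\<And>k u. (k, u) \<in> P \<Longrightarrow> (x (idx (k, u)), y (idx (k, u))) \<in> margin_set k u"
    by fastforce
  define K where "K = Max (insert 1 (fst ` P))"
  define N where "N = Suc (Max (insert 0 (idx ` P)))"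
  have "1 \<le> K" and K: "\<And>k u. (k, u) \<in> P \<Longrightarrow> k \<le> K"
    using \<open>finite P\<close> by (auto simp: K_def intro!: Max_ge image_eqI)
  have N: "\<And>p. p \<in> P \<Longrightarrow> idx p < N"
    using \<open>finite P\<close> by (auto simp: N_def less_Suc_eq_le intro!: Max_ge)
  have "nonseparable_with_margin x y N (1 / (2 * K))"
    unfolding nonseparable_with_margin_def
  proof
    fix \<beta> :: 'a
    show "\<exists>i<N. (2 * y i - 1) * (x i \<bullet> \<beta>) \<le> - (1 / (2 * K)) * norm \<beta>"
    proof (cases "\<beta> = 0")
      case True
      then show ?thesis by (auto simp: N_def)
    next
      case False
      define w where "w = \<beta> /\<^sub>R norm \<beta>"
      have "w \<in> sphere 0 1" using False by (simp add: w_def)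
      then have "w \<in> (\<Union>(k, u)\<in>P. ball u (1 / (2 * k^2)))" using cover by blast
      then obtain k u where ku: "(k, u) \<in> P" and "dist w u < 1 / (2 * k^2)"
        by (auto simp: dist_commute)
      define i where "i = idx (k, u)"
      have "\<bar>2 * y i - 1\<bar> = 1" using y[of i] by auto
      then have "(2 * y i - 1) * (x i \<bullet> w) \<le> - 1 / (2 * k)"
        using idx[OF ku] \<open>dist w u < 1 / (2 * k^2)\<close> k[OF ku] unfolding i_def
        by (intro margin_set_perturb) auto
      also have "\<dots> \<le> - 1 / (2 * K)"
        using k[OF ku] K[OF ku] by (simp add: frac_le)
      finally have "(2 * y i - 1) * (x i \<bullet> w) \<le> - 1 / (2 * K)" .
      then have "norm \<beta> * ((2 * y i - 1) * (x i \<bullet> w)) \<le> norm \<beta> * (- 1 / (2 * K))"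
        by (intro mult_left_mono) auto
      moreover have "x i \<bullet> \<beta> = norm \<beta> * (x i \<bullet> w)"
        using False by (simp add: w_def)
      ultimately have "(2 * y i - 1) * (x i \<bullet> \<beta>) \<le> - (1 / (2 * K)) * norm \<beta>"
        by (simp add: algebra_simps)
      moreover have "i < N" using N[OF ku] by (simp add: i_def)
      ultimately show ?thesis by blast
    qed
  qed
  moreover have "0 < 1 / (2 * K)" using \<open>1 \<le> K\<close> by simp
  ultimately show ?thesis by blast
qed

lemma (in prob_space) AE_eventually_nonseparable:
  fixes X :: "nat \<Rightarrow> 'a \<Rightarrow> 'b::euclidean_space" and Y :: "nat \<Rightarrow> 'a \<Rightarrow> real"
  assumes X [measurable]: "\<And>i. X i \<in> borel_measurable M"
    and Y [measurable]: "\<And>i. Y i \<in> borel_measurable M"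
    and Y01: "\<And>i \<omega>. \<omega> \<in> space M \<Longrightarrow> Y i \<omega> \<in> {0, 1}"
    and indep: "indep_vars (\<lambda>_. borel) (\<lambda>i \<omega>. (X i \<omega>, Y i \<omega>)) UNIV"
    and ident: "\<And>i. distr M borel (\<lambda>\<omega>. (X i \<omega>, Y i \<omega>)) = distr M borel (\<lambda>\<omega>. (X 0 \<omega>, Y 0 \<omega>))"
    and misclassified: "\<And>u. norm u = 1 \<Longrightarrow> prob {\<omega> \<in> space M. (2 * Y 0 \<omega> - 1) * (X 0 \<omega> \<bullet> u) < 0} > 0"
  shows "AE \<omega> in M. \<exists>c>0. \<exists>N. nonseparable_with_margin (\<lambda>i. X i \<omega>) (\<lambda>i. Y i \<omega>) N c"
proof -
  define Z where "Z i \<omega> = (X i \<omega>, Y i \<omega>)" for i \<omega>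
  have Z [measurable]: "Z i \<in> borel_measurable M" for i
    unfolding Z_def by measurable
  have [measurable]: "(\<lambda>x. x \<bullet> u) \<in> borel_measurable borel" for u :: 'b
    by (intro borel_measurable_continuous_onI continuous_intros)
  define P where "P = {(k, u). u \<in> sphere 0 1 \<and> 1 \<le> k \<and> prob {\<omega> \<in> space M. Z 0 \<omega> \<in> margin_set k u} > 0}"
  have cover_P: "sphere 0 1 \<subseteq> (\<Union>(k, u)\<in>P. ball u (1 / (2 * k^2)))"
  proof
    fix u :: 'b assume u: "u \<in> sphere 0 1"
    have "{\<omega> \<in> space M. (2 * Y 0 \<omega> - 1) * (X 0 \<omega> \<bullet> u) < 0}
        \<subseteq> (\<Union>m. {\<omega> \<in> space M. Z 0 \<omega> \<in> margin_set (real (Suc m)) u})"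
      using misclassified_in_margin_set by (fastforce simp: Z_def)
    then have "\<exists>m. prob {\<omega> \<in> space M. Z 0 \<omega> \<in> margin_set (real (Suc m)) u} > 0"
      using u by (intro ex_prob_pos_of_cover[OF _ _ _ misclassified]) (simp_all, measurable)
    then obtain m where "(real (Suc m), u) \<in> P" using u by (auto simp: P_def)
    then show "u \<in> (\<Union>(k, u)\<in>P. ball u (1 / (2 * k^2)))"
      by (intro UN_I[of "(real (Suc m), u)"]) auto
  qed
  obtain P' where "P' \<subseteq> P" and "finite P'"
    and cover: "sphere 0 1 \<subseteq> (\<Union>(k, u)\<in>P'. ball u (1 / (2 * k^2)))"
    by (rule compactE_image[OF compact_sphere _ cover_P]) (auto split: prod.splits)
  have "AE \<omega> in M. \<forall>p\<in>P'. \<exists>i. Z i \<omega> \<in> margin_set (fst p) (snd p)"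
  proof (rule AE_finite_allI[OF \<open>finite P'\<close>])
    fix p assume "p \<in> P'"
    then have "prob {\<omega> \<in> space M. Z 0 \<omega> \<in> margin_set (fst p) (snd p)} > 0"
      using \<open>P' \<subseteq> P\<close> by (auto simp: P_def)
    then show "AE \<omega> in M. \<exists>i. Z i \<omega> \<in> margin_set (fst p) (snd p)"
      using indep ident unfolding Z_def by (intro AE_exists_iid_in) auto
  qed
  then show ?thesis
    using AE_space
  proof eventually_elim
    case (elim \<omega>)
    show ?case
    proof (rule nonseparable_if_margin_sets_hit[OF _ \<open>finite P'\<close> _ cover])
      show "Y i \<omega> \<in> {0, 1}" for i using Y01 elim by blast
      show "1 \<le> k" if "(k, u) \<in> P'" for k u using that \<open>P' \<subseteq> P\<close> by (auto simp: P_def)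
      show "\<exists>i. (X i \<omega>, Y i \<omega>) \<in> margin_set k u" if "(k, u) \<in> P'" for k u
        using bspec[OF elim(1) that] by (simp add: Z_def)
    qed
  qed
qed

theorem proposition11:
  fixes M :: "'a measure"
    and X :: "nat \<Rightarrow> 'a \<Rightarrow> real^'p"
    and Y :: "nat \<Rightarrow> 'a \<Rightarrow> real"
    and G :: "real^'p \<Rightarrow> real"
    and v :: "real^'p"
    and Q :: "real^'p^'p"
  assumes "prob_space M"
    and Q: "pos_def Q \<or> Q = 0"
    and meas_X: "\<And>i. X i \<in> borel_measurable M"
    and meas_Y: "\<And>i. Y i \<in> borel_measurable M"
    and Y01: "\<And>i \<omega>. \<omega> \<in> space M \<Longrightarrow> Y i \<omega> \<in> {0, 1}"
    and indep: "prob_space.indep_vars M (\<lambda>_. borel) (\<lambda>i \<omega>. (X i \<omega>, Y i \<omega>)) UNIV"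
    and ident: "\<And>i. distr M borel (\<lambda>\<omega>. (X i \<omega>, Y i \<omega>)) = distr M borel (\<lambda>\<omega>. (X 0 \<omega>, Y 0 \<omega>))"
    and G_meas: "G \<in> borel_measurable borel"
    and G_range: "\<And>x. 0 < G x \<and> G x < 1"
    and cond: "\<And>B. B \<in> sets borel \<Longrightarrow>
        measure M {\<omega> \<in> space M. X 0 \<omega> \<in> B \<and> Y 0 \<omega> = 1}
        = (\<integral>\<omega>. indicator B (X 0 \<omega>) * G (X 0 \<omega>) \<partial>M)"
    and A2_int: "\<And>j k. integrable M (\<lambda>\<omega>. X 0 \<omega> $ j * X 0 \<omega> $ k)"
    and A2_pd: "pos_def (\<chi> j k. \<integral>\<omega>. X 0 \<omega> $ j * X 0 \<omega> $ k \<partial>M)"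
    and A3: "\<And>s \<beta>. sign_vector s \<Longrightarrow> \<beta> \<noteq> 0 \<Longrightarrow>
        measure M {\<omega> \<in> space M.
          (indicator (open_orthant s) (X 0 \<omega>) + indicator (open_orthant s) (- X 0 \<omega>))
            * (X 0 \<omega> \<bullet> \<beta>) \<noteq> (0::real)} > 0"
  shows "AE \<omega> in M. \<exists>N. \<forall>n\<ge>N.
           posterior_proper (\<lambda>i. X i \<omega>) (\<lambda>i. Y i \<omega>) v Q n"
proof -
  interpret prob_space M by fact
  note [measurable] = meas_X meas_Y
  have misclassified: "prob {\<omega> \<in> space M. (2 * Y 0 \<omega> - 1) * (X 0 \<omega> \<bullet> u) < 0} > 0"
    if "norm u = 1" for u
  proof (rule prob_misclassified_pos[OF meas_X meas_Y Y01 G_meas G_range cond])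
    have "sign_vector (\<chi> k. 1 :: real^'p)" by (simp add: sign_vector_def)
    moreover have "u \<noteq> 0" using that by auto
    ultimately show "prob {\<omega> \<in> space M. X 0 \<omega> \<bullet> u \<noteq> 0} > 0"
      by (rule order_less_le_trans[OF A3]) (intro finite_measure_mono; auto)
  qed
  have "AE \<omega> in M. \<exists>c>0. \<exists>N. nonseparable_with_margin (\<lambda>i. X i \<omega>) (\<lambda>i. Y i \<omega>) N c"
    by (rule AE_eventually_nonseparable[OF meas_X meas_Y Y01 indep ident misclassified])
  then show ?thesis
    using AE_space
  proof eventually_elim
    case (elim \<omega>)
    then obtain c N where "0 < c" and nonsep: "nonseparable_with_margin (\<lambda>i. X i \<omega>) (\<lambda>i. Y i \<omega>) N c"
      by blast
    have "posterior_proper (\<lambda>i. X i \<omega>) (\<lambda>i. Y i \<omega>) v Q n" if "N \<le> n" for n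
      using Y01 elim(2) by (intro posterior_proper_if_nonseparable[OF _ Q \<open>0 < c\<close>]
          nonseparable_with_margin_mono[OF nonsep that]) blast
    then show ?case by blast
  qed
qed

end
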